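(* In the 1-sided False Negative regime, the following Naive algorithm finds a realized spanning tree while performing $O(m\log n)$ queries in expectation: proceed in rounds, in each round querying every one of the $m$ edges of the moldgraph once, and stop as soon as the edges that have received a ``Yes'' answer contain a spanning tree (which is then output).
   Context: Problem (graph connectivity with noisy queries): a graph $G=(V,E)$, the moldgraph, with $n$ vertices and $m$ edges is given. An adversary selects an arbitrary connected spanning subgraph of $G$ to be realized. The algorithm may query an oracle on any edge $e$ (``Is $e$ realized?''), receiving ``Yes''/``No''; each query costs $1$; answers to distinct queries (including repeated queries of the same edge) are independent. Goal: output a spanning tree of $G$ all of whose edges are realized. In the 1-sided False Negative regime: for a non-realized edge the answer is always ``No''; for a realized edge the answer is ``No'' with a constant probability $p<1/2$ and ``Yes'' with probability $1-p$. *)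

theory Defs
  imports "HOL-Probability.Probability"
begin

definition graph :: "'a set \<Rightarrow> 'a set set \<Rightarrow> bool" where
  "graph V E \<longleftrightarrow> finite V \<and> E \<subseteq> {e. e \<subseteq> V \<and> card e = 2}"

definition edge_rel :: "'a set set \<Rightarrow> ('a \<times> 'a) set" where
  "edge_rel F = {(x, y). {x, y} \<in> F}"

definition connected_on :: "'a set \<Rightarrow> 'a set set \<Rightarrow> bool" where
  "connected_on V F \<longleftrightarrow> (\<forall>u\<in>V. \<forall>v\<in>V. (u, v) \<in> (edge_rel F)\<^sup>*)"

definition spanning_tree :: "'a set \<Rightarrow> 'a set set \<Rightarrow> bool" where
  "spanning_tree V T \<longleftrightarrow> finite T \<and> T \<subseteq> {e. e \<subseteq> V \<and> card e = 2}
      \<and> connected_on V T \<and> card T = card V - 1"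

text \<open>Distribution of the answers of one round of the Naive algorithm (each edge of E
  queried once): a realized edge answers Yes (True) with probability 1-p, a non-realized
  edge always answers No; answers are independent.\<close>
definition round_pmf :: "'a set set \<Rightarrow> 'a set set \<Rightarrow> real \<Rightarrow> ('a set \<Rightarrow> bool) pmf" where
  "round_pmf E R p = Pi_pmf E False
      (\<lambda>e. if e \<in> R then bernoulli_pmf (1 - p) else return_pmf False)"

text \<open>Probability space: an infinite i.i.d. sequence of rounds (rounds indexed from 0).\<close>
definition naive_space :: "'a set set \<Rightarrow> 'a set set \<Rightarrow> real \<Rightarrow> ('a set \<Rightarrow> bool) stream measure" where
  "naive_space E R p = stream_space (measure_pmf (round_pmf E R p))"

definition yes_edges :: "'a set set \<Rightarrow> ('a set \<Rightarrow> bool) stream \<Rightarrow> nat \<Rightarrow> 'a set set" where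
  "yes_edges E \<omega> t = {e \<in> E. \<exists>i\<le>t. snth \<omega> i e}"

definition stop_round :: "'a set \<Rightarrow> 'a set set \<Rightarrow> ('a set \<Rightarrow> bool) stream \<Rightarrow> nat" where
  "stop_round V E \<omega> = (LEAST t. \<exists>T \<subseteq> yes_edges E \<omega> t. spanning_tree V T)"

definition naive_queries :: "'a set \<Rightarrow> 'a set set \<Rightarrow> ('a set \<Rightarrow> bool) stream \<Rightarrow> nat" where
  "naive_queries V E \<omega> = card E * (stop_round V E \<omega> + 1)"

end

theory Submission
  imports Defs
begin

(* Fix a spanning tree T of the realized subgraph. The algorithm stops no later than the first
   round by which every edge of T has been answered Yes. By a union bound, the probability that
   some edge of T has received no Yes in the first t rounds is at most min 1 (n p^t), which is
   at most min 1 (n 2^-t); summing over t bounds the expected number of rounds by log2 n + 3,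
   and every round costs m queries. The tree found is realized because a non-realized edge
   never answers Yes. *)

lemma rtrancl_exits_set:
  assumes "(x, y) \<in> r\<^sup>*" "x \<in> S" "y \<notin> S"
  shows "\<exists>a b. (a, b) \<in> r \<and> a \<in> S \<and> b \<notin> S"
  using assms by (induction rule: rtrancl_induct) auto

lemma connected_on_insert_edge:
  assumes "connected_on S T" "a \<in> S"
  shows "connected_on (insert b S) (insert {a, b} T)"
proof -
  let ?r = "(edge_rel (insert {a, b} T))\<^sup>*"
  have "edge_rel T \<subseteq> edge_rel (insert {a, b} T)"
    by (auto simp: edge_rel_def)
  then have old: "(u, v) \<in> ?r" if "u \<in> S" "v \<in> S" for u v
    using assms(1) that rtrancl_mono unfolding connected_on_def by blast
  have "(a, b) \<in> ?r" "(b, a) \<in> ?r"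
    by (auto simp: edge_rel_def insert_commute)
  then have "(u, a) \<in> ?r \<and> (a, u) \<in> ?r" if "u \<in> insert b S" for u
    using that old[OF _ assms(2)] old[OF assms(2)] by auto
  then show ?thesis
    unfolding connected_on_def by (meson rtrancl_trans)
qed

lemma connected_on_subtree_card:
  assumes "finite V" "connected_on V R" "R \<subseteq> Pow V" "1 \<le> k" "k \<le> card V"
  shows "\<exists>S T. S \<subseteq> V \<and> card S = k \<and> T \<subseteq> R \<and> T \<subseteq> Pow S \<and> card T = k - 1 \<and> connected_on S T"
  using assms(4,5)
proof (induction k rule: dec_induct)
  case base
  then obtain v where "v \<in> V"
    by fastforce
  then show ?case
    by (intro exI[of _ "{v}"] exI[of _ "{}"]) (auto simp: connected_on_def)
next
  case (step n)
  then obtain S T where ST: "S \<subseteq> V" "card S = n" "T \<subseteq> R" "T \<subseteq> Pow S" "card T = n - 1"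
      "connected_on S T"
    by auto
  obtain v where "v \<in> S"
    using ST(2) step.hyps(1) by fastforce
  have "S \<noteq> V"
    using ST(2) step.hyps(2) assms(5) by auto
  then obtain w where "w \<in> V" "w \<notin> S"
    using ST(1) by blast
  with \<open>v \<in> S\<close> obtain a b where ab: "{a, b} \<in> R" "a \<in> S" "b \<notin> S"
    using assms(2) ST(1) rtrancl_exits_set[of v w "edge_rel R" S]
    unfolding connected_on_def edge_rel_def by blast
  have "finite S"
    using ST(1) assms(1) finite_subset by blast
  then have "finite T"
    using ST(4) finite_subset by blast
  have "{a, b} \<notin> T"
    using ST(4) ab(3) by auto
  with \<open>finite T\<close> have "card (insert {a, b} T) = Suc n - 1"
    using ST(5) step.hyps(1) by simp
  moreover have "card (insert b S) = Suc n"
    using \<open>finite S\<close> ab(3) ST(2) by simp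
  moreover have "insert b S \<subseteq> V"
    using ab(1) assms(3) ST(1) by auto
  moreover have "insert {a, b} T \<subseteq> Pow (insert b S)"
    using ST(4) ab(2) by auto
  moreover have "insert {a, b} T \<subseteq> R"
    using ST(3) ab(1) by blast
  ultimately show ?case
    using connected_on_insert_edge[OF ST(6) ab(2)] by (intro exI conjI) assumption+
qed

lemma connected_on_imp_spanning_tree:
  assumes "finite V" "V \<noteq> {}" "connected_on V R" "R \<subseteq> {e. e \<subseteq> V \<and> card e = 2}"
  shows "\<exists>T \<subseteq> R. spanning_tree V T"
proof -
  have "R \<subseteq> Pow V"
    using assms(4) by blast
  moreover have "1 \<le> card V"
    using assms(1,2) by (simp add: Suc_leI card_gt_0_iff)
  ultimately obtain S T where ST: "S \<subseteq> V" "card S = card V" "T \<subseteq> R" "T \<subseteq> Pow S"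
      "card T = card V - 1" "connected_on S T"
    using connected_on_subtree_card[OF assms(1,3) _ _ order_refl] by blast
  have "S = V"
    using ST(1,2) assms(1) by (simp add: card_subset_eq)
  then have "spanning_tree V T"
    using ST assms(1,4) finite_subset[OF ST(4)] unfolding spanning_tree_def by auto
  with ST(3) show ?thesis
    by blast
qed

lemma yes_in_set_round_pmf_imp_realized:
  assumes "finite E" "f \<in> set_pmf (round_pmf E R p)" "f e"
  shows "e \<in> R"
  using assms by (auto simp: round_pmf_def set_Pi_pmf PiE_dflt_def split: if_splits)

lemma emeasure_round_pmf_no:
  assumes "finite E" "e \<in> E" "e \<in> R" "0 \<le> p" "p \<le> 1"
  shows "emeasure (measure_pmf (round_pmf E R p)) {f. \<not> f e} = ennreal p"
proof -
  have "emeasure (measure_pmf (round_pmf E R p)) {f. \<not> f e}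
      = emeasure (measure_pmf (map_pmf (\<lambda>f. f e) (round_pmf E R p))) {False}"
    by (simp add: map_pmf_rep_eq emeasure_distr vimage_def)
  also have "map_pmf (\<lambda>f. f e) (round_pmf E R p) = bernoulli_pmf (1 - p)"
    using assms(1-3) by (simp add: round_pmf_def Pi_pmf_component)
  finally show ?thesis
    using assms(4,5) by (simp add: emeasure_pmf_single)
qed

lemma sets_stream_space_all_less:
  fixes q :: "'x pmf"
  shows "{\<omega>. \<forall>i<t. Q (\<omega> !! i)} \<in> sets (stream_space (measure_pmf q))"
proof -
  have "Measurable.pred (stream_space (measure_pmf q)) (\<lambda>\<omega>. Q (\<omega> !! i))" for i
    by (rule measurable_compose[OF measurable_snth]) simp
  then have "Measurable.pred (stream_space (measure_pmf q)) (\<lambda>\<omega>. \<forall>i\<in>{..<t}. Q (\<omega> !! i))"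
    by (intro pred_intros_finite) auto
  then show ?thesis
    by (simp add: pred_def space_stream_space Ball_def)
qed

lemma emeasure_stream_space_all_less:
  fixes q :: "'x pmf"
  shows "emeasure (stream_space (measure_pmf q)) {\<omega>. \<forall>i<t. Q (\<omega> !! i)}
           = emeasure (measure_pmf q) {x. Q x} ^ t"
proof (induction t)
  case 0
  interpret S: prob_space "stream_space (measure_pmf q)"
    by (rule prob_space.prob_space_stream_space[OF prob_space_measure_pmf])
  show ?case
    using S.emeasure_space_1 by (simp add: space_stream_space)
next
  case (Suc t)
  let ?S = "stream_space (measure_pmf q)" and ?A = "\<lambda>t. {\<omega>. \<forall>i<t. Q (\<omega> !! i)}"
  have "emeasure ?S {\<omega> \<in> space ?S. x ## \<omega> \<in> ?A (Suc t)} = indicator {x. Q x} x * emeasure ?S (?A t)"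
    for x
    by (simp add: space_stream_space All_less_Suc2 split: split_indicator)
  then have "emeasure ?S (?A (Suc t)) = (\<integral>\<^sup>+x. indicator {x. Q x} x * emeasure ?S (?A t) \<partial>q)"
    by (simp add: prob_space.emeasure_stream_space[OF prob_space_measure_pmf sets_stream_space_all_less])
  also have "\<dots> = emeasure (measure_pmf q) {x. Q x} * emeasure ?S (?A t)"
    by (simp add: nn_integral_multc)
  finally show ?case
    by (simp add: Suc)
qed

definition unconfirmed :: "'e set \<Rightarrow> nat \<Rightarrow> ('e \<Rightarrow> bool) stream set" where
  "unconfirmed T t = {\<omega>. \<exists>e\<in>T. \<forall>i<t. \<not> (\<omega> !! i) e}"

lemma unconfirmed_eq_UN: "unconfirmed T t = (\<Union>e\<in>T. {\<omega>. \<forall>i<t. \<not> (\<omega> !! i) e})"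
  by (auto simp: unconfirmed_def)

lemma unconfirmed_antimono: "s \<le> t \<Longrightarrow> unconfirmed T t \<subseteq> unconfirmed T s"
  unfolding unconfirmed_def using less_le_trans by blast

lemma notin_unconfirmed_Suc_iff:
  assumes "T \<subseteq> E"
  shows "\<omega> \<notin> unconfirmed T (Suc t) \<longleftrightarrow> T \<subseteq> yes_edges E \<omega> t"
  using assms by (auto simp: unconfirmed_def yes_edges_def less_Suc_eq_le)

lemma sets_unconfirmed:
  fixes q :: "('e \<Rightarrow> bool) pmf"
  assumes "finite T"
  shows "unconfirmed T t \<in> sets (stream_space (measure_pmf q))"
  unfolding unconfirmed_eq_UN by (rule sets.finite_UN[OF assms sets_stream_space_all_less])

lemma emeasure_unconfirmed_le:
  fixes q :: "('e \<Rightarrow> bool) pmf" and p :: real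
  assumes "finite T" "0 \<le> p" "\<And>e. e \<in> T \<Longrightarrow> emeasure (measure_pmf q) {f. \<not> f e} \<le> ennreal p"
  shows "emeasure (stream_space (measure_pmf q)) (unconfirmed T t) \<le> ennreal (card T * p ^ t)"
proof -
  let ?S = "stream_space (measure_pmf q)"
  have "emeasure ?S (unconfirmed T t) \<le> (\<Sum>e\<in>T. emeasure ?S {\<omega>. \<forall>i<t. \<not> (\<omega> !! i) e})"
    unfolding unconfirmed_eq_UN
    by (rule emeasure_subadditive_finite[OF assms(1)]) (auto intro: sets_stream_space_all_less)
  also have "\<dots> \<le> (\<Sum>e\<in>T. ennreal p ^ t)"
  proof (rule sum_mono)
    fix e
    assume "e \<in> T"
    then show "emeasure ?S {\<omega>. \<forall>i<t. \<not> (\<omega> !! i) e} \<le> ennreal p ^ t"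
      using emeasure_stream_space_all_less[of q t "\<lambda>f. \<not> f e"] assms(3) by (simp add: power_mono)
  qed
  also have "\<dots> = ennreal (card T * p ^ t)"
    using assms(2) by (simp add: ennreal_power ennreal_mult ennreal_of_nat_eq_real_of_nat)
  finally show ?thesis .
qed

lemma of_nat_le_suminf_indicator:
  assumes "\<And>t. t < N \<Longrightarrow> x \<in> A t"
  shows "of_nat N \<le> (\<Sum>t. indicator (A t) x :: ennreal)"
proof -
  have "(of_nat N :: ennreal) = (\<Sum>t<N. indicator (A t) x)"
    using assms by simp
  also have "\<dots> \<le> (\<Sum>t. indicator (A t) x)"
    by (rule sum_le_suminf) auto
  finally show ?thesis .
qed

lemma suminf_indicator_neq_top_imp_notin:
  assumes "(\<Sum>t. indicator (A t) x :: ennreal) \<noteq> \<top>"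
  shows "\<exists>t. x \<notin> A t"
proof (rule ccontr)
  assume "\<nexists>t. x \<notin> A t"
  then have "of_nat N \<le> (\<Sum>t. indicator (A t) x :: ennreal)" for N
    by (intro of_nat_le_suminf_indicator) blast
  moreover obtain N where "(\<Sum>t. indicator (A t) x :: ennreal) < of_nat N"
    using assms ennreal_Ex_less_of_nat top.not_eq_extremum by blast
  ultimately show False
    by (simp add: not_le[symmetric])
qed

lemma suminf_min_one_geometric_le:
  fixes n :: real
  assumes "1 \<le> n"
  shows "(\<Sum>t. ennreal (min 1 (n * (1/2)^t))) \<le> ennreal (log 2 n + 3)"
proof -
  define k where "k = nat \<lceil>log 2 n\<rceil>"
  have "0 \<le> log 2 n"
    using assms by simp
  then have k_ge: "log 2 n \<le> real k" and k_le: "real k \<le> log 2 n + 1"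
    unfolding k_def by linarith+
  have n_le: "n \<le> 2 ^ k"
  proof -
    have "n = 2 powr log 2 n"
      using assms by simp
    also have "\<dots> \<le> 2 powr real k"
      using k_ge by (intro powr_mono) auto
    finally show ?thesis
      by (simp add: powr_realpow)
  qed
  have shift_sums: "(\<lambda>t. (1/2::real) ^ (t - k)) sums (2 + real k)"
    using sums_iff_shift[of "\<lambda>t. (1/2::real) ^ (t - k)" k 2] geometric_sums[of "1/2::real"] by simp
  \<comment> \<open>for t < k the truncated subtraction makes the right-hand side 1\<close>
  have "min 1 (n * (1/2)^t) \<le> (1/2::real) ^ (t - k)" for t
  proof (cases "t < k")
    case False
    have "n * (1/2)^t \<le> 2 ^ k * (1/2::real) ^ t"
      using n_le by (intro mult_right_mono) auto
    also have "\<dots> = (1/2) ^ (t - k)"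
      using False by (simp add: power_diff field_simps)
    finally show ?thesis
      by linarith
  qed simp
  then have "(\<Sum>t. ennreal (min 1 (n * (1/2)^t))) \<le> (\<Sum>t. ennreal ((1/2) ^ (t - k)))"
    by (intro suminf_le summableI) (simp_all add: ennreal_leI)
  also have "\<dots> = ennreal (2 + real k)"
    by (rule suminf_ennreal_eq[OF _ shift_sums]) simp
  also have "\<dots> \<le> ennreal (log 2 n + 3)"
    using k_le by (intro ennreal_leI) linarith
  finally show ?thesis .
qed

lemma log2_add_3_le:
  fixes n :: real
  assumes "2 \<le> n"
  shows "log 2 n + 3 \<le> 4 / ln 2 * ln n"
proof -
  have "1 \<le> log 2 n"
    using assms by simp
  then show ?thesis
    by (simp add: log_def field_simps)
qed

locale naive_instance =
  fixes V :: "'a set" and E R :: "'a set set" and p :: real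
  assumes graph: "graph V E" and two_le_card_V: "2 \<le> card V"
    and realized_subset: "R \<subseteq> E" and realized_connected: "connected_on V R"
    and p_nonneg: "0 \<le> p" and p_le_half: "p \<le> 1/2"
begin

lemma finite_V: "finite V"
  using graph by (simp add: graph_def)

lemma edges_subset: "E \<subseteq> {e. e \<subseteq> V \<and> card e = 2}"
  using graph by (simp add: graph_def)

lemma finite_E: "finite E"
proof -
  have "E \<subseteq> Pow V"
    using edges_subset by auto
  then show ?thesis
    using finite_V finite_subset by blast
qed

sublocale S: prob_space "naive_space E R p"
  unfolding naive_space_def by (rule prob_space.prob_space_stream_space[OF prob_space_measure_pmf])

lemma realized_spanning_tree: "\<exists>T \<subseteq> R. spanning_tree V T"
  using two_le_card_V realized_subset edges_subset
  by (intro connected_on_imp_spanning_tree[OF finite_V _ realized_connected]) auto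

lemma AE_yes_edges_realized: "AE \<omega> in naive_space E R p. \<forall>t. yes_edges E \<omega> t \<subseteq> R"
proof -
  have "AE \<omega> in naive_space E R p. stream_all (\<lambda>f. \<forall>e. f e \<longrightarrow> e \<in> R) \<omega>"
    unfolding naive_space_def using yes_in_set_round_pmf_imp_realized[OF finite_E]
    by (intro prob_space.AE_stream_all[OF prob_space_measure_pmf]) (auto intro!: AE_pmfI)
  then show ?thesis
    by eventually_elim (auto simp: stream_all_def yes_edges_def)
qed

context
  fixes T assumes T_realized: "T \<subseteq> R" and T_spanning: "spanning_tree V T"
begin

lemma T_subset_E: "T \<subseteq> E"
  using T_realized realized_subset by blast

lemma unconfirmed_in_sets: "unconfirmed T t \<in> sets (naive_space E R p)"
  using T_spanning unfolding naive_space_def spanning_tree_def by (intro sets_unconfirmed) blast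

lemma count_unconfirmed_measurable:
  "(\<lambda>\<omega>. \<Sum>t. indicator (unconfirmed T t) \<omega> :: ennreal) \<in> borel_measurable (naive_space E R p)"
  by (intro borel_measurable_suminf_order borel_measurable_indicator unconfirmed_in_sets)

lemma emeasure_unconfirmed_tree_le:
  "emeasure (naive_space E R p) (unconfirmed T t) \<le> ennreal (min 1 (card V * (1/2)^t))"
proof -
  have "finite T" "card T \<le> card V"
    using T_spanning by (auto simp: spanning_tree_def)
  have "emeasure (naive_space E R p) (unconfirmed T t) \<le> ennreal (card T * p ^ t)"
    unfolding naive_space_def
  proof (rule emeasure_unconfirmed_le[OF \<open>finite T\<close> p_nonneg])
    fix e
    assume "e \<in> T"
    then show "emeasure (measure_pmf (round_pmf E R p)) {f. \<not> f e} \<le> ennreal p"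
      using T_realized realized_subset p_nonneg p_le_half by (simp add: emeasure_round_pmf_no finite_E subset_iff)
  qed
  also have "\<dots> \<le> ennreal (card V * (1/2)^t)"
    using \<open>card T \<le> card V\<close> p_nonneg p_le_half by (intro ennreal_leI mult_mono power_mono) auto
  finally show ?thesis
    using S.emeasure_le_1 by (simp flip: min_ennreal)
qed

lemma stop_round_le_count_unconfirmed:
  "of_nat (stop_round V E \<omega> + 1) \<le> (\<Sum>t. indicator (unconfirmed T t) \<omega> :: ennreal)"
proof (rule of_nat_le_suminf_indicator, rule ccontr)
  fix t
  assume "t < stop_round V E \<omega> + 1" "\<omega> \<notin> unconfirmed T t"
  have "T \<noteq> {}"
    using T_spanning two_le_card_V by (auto simp: spanning_tree_def)
  then have "unconfirmed T 0 = UNIV"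
    by (auto simp: unconfirmed_def)
  with \<open>\<omega> \<notin> unconfirmed T t\<close> have "t \<noteq> 0"
    by (metis UNIV_I)
  then obtain t' where "t = Suc t'"
    using not0_implies_Suc by blast
  with \<open>\<omega> \<notin> unconfirmed T t\<close> have "T \<subseteq> yes_edges E \<omega> t'"
    using notin_unconfirmed_Suc_iff[OF T_subset_E] by blast
  then have "stop_round V E \<omega> \<le> t'"
    unfolding stop_round_def using T_spanning by (intro Least_le) blast
  with \<open>t < stop_round V E \<omega> + 1\<close> \<open>t = Suc t'\<close> show False
    by linarith
qed

lemma nn_integral_count_unconfirmed_le:
  "(\<integral>\<^sup>+\<omega>. (\<Sum>t. indicator (unconfirmed T t) \<omega>) \<partial>naive_space E R p) \<le> ennreal (log 2 (card V) + 3)"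
proof -
  have "(\<integral>\<^sup>+\<omega>. (\<Sum>t. indicator (unconfirmed T t) \<omega>) \<partial>naive_space E R p)
      = (\<Sum>t. \<integral>\<^sup>+\<omega>. indicator (unconfirmed T t) \<omega> \<partial>naive_space E R p)"
    by (intro nn_integral_suminf borel_measurable_indicator unconfirmed_in_sets)
  also have "\<dots> = (\<Sum>t. emeasure (naive_space E R p) (unconfirmed T t))"
    by (simp add: unconfirmed_in_sets)
  also have "\<dots> \<le> (\<Sum>t. ennreal (min 1 (card V * (1/2)^t)))"
    by (intro suminf_le summableI emeasure_unconfirmed_tree_le)
  also have "\<dots> \<le> ennreal (log 2 (card V) + 3)"
    using two_le_card_V by (intro suminf_min_one_geometric_le) simp
  finally show ?thesis .
qed

lemma AE_eventually_confirmed: "AE \<omega> in naive_space E R p. \<exists>t. T \<subseteq> yes_edges E \<omega> t"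
proof -
  have "(\<integral>\<^sup>+\<omega>. (\<Sum>t. indicator (unconfirmed T t) \<omega>) \<partial>naive_space E R p) \<noteq> \<top>"
    using nn_integral_count_unconfirmed_le by (rule neq_top_trans[OF ennreal_neq_top])
  then have "AE \<omega> in naive_space E R p. (\<Sum>t. indicator (unconfirmed T t) \<omega> :: ennreal) \<noteq> \<top>"
    using nn_integral_PInf_AE[OF count_unconfirmed_measurable] by simp
  then show ?thesis
  proof eventually_elim
    case (elim \<omega>)
    obtain t where "\<omega> \<notin> unconfirmed T t"
      using suminf_indicator_neq_top_imp_notin[OF elim] by blast
    then have "\<omega> \<notin> unconfirmed T (Suc t)"
      using unconfirmed_antimono[of t "Suc t" T] by auto
    then show ?case
      using notin_unconfirmed_Suc_iff[OF T_subset_E] by blast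
  qed
qed

end

lemma nn_integral_naive_queries_le:
  "(\<integral>\<^sup>+\<omega>. ennreal (real (naive_queries V E \<omega>)) \<partial>naive_space E R p)
     \<le> ennreal (card E * (log 2 (card V) + 3))"
proof -
  obtain T where T: "T \<subseteq> R" "spanning_tree V T"
    using realized_spanning_tree by blast
  have "ennreal (real (naive_queries V E \<omega>))
      \<le> of_nat (card E) * (\<Sum>t. indicator (unconfirmed T t) \<omega>)" for \<omega>
  proof -
    have "ennreal (real (naive_queries V E \<omega>)) = of_nat (card E) * of_nat (stop_round V E \<omega> + 1)"
      unfolding naive_queries_def ennreal_of_nat_eq_real_of_nat[symmetric] by (rule of_nat_mult)
    also have "\<dots> \<le> of_nat (card E) * (\<Sum>t. indicator (unconfirmed T t) \<omega>)"
      by (intro mult_left_mono stop_round_le_count_unconfirmed[OF T]) simp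
    finally show ?thesis .
  qed
  then have "(\<integral>\<^sup>+\<omega>. ennreal (real (naive_queries V E \<omega>)) \<partial>naive_space E R p)
      \<le> (\<integral>\<^sup>+\<omega>. of_nat (card E) * (\<Sum>t. indicator (unconfirmed T t) \<omega>) \<partial>naive_space E R p)"
    by (intro nn_integral_mono)
  also have "\<dots> = of_nat (card E) * (\<integral>\<^sup>+\<omega>. (\<Sum>t. indicator (unconfirmed T t) \<omega>) \<partial>naive_space E R p)"
    by (rule nn_integral_cmult[OF count_unconfirmed_measurable[OF T]])
  also have "\<dots> \<le> of_nat (card E) * ennreal (log 2 (card V) + 3)"
    by (intro mult_left_mono nn_integral_count_unconfirmed_le[OF T]) simp
  also have "\<dots> = ennreal (card E * (log 2 (card V) + 3))"
    using two_le_card_V by (simp add: ennreal_mult ennreal_of_nat_eq_real_of_nat)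
  finally show ?thesis .
qed

lemma AE_naive_correct:
  "AE \<omega> in naive_space E R p.
     (\<exists>t. \<exists>T \<subseteq> yes_edges E \<omega> t. spanning_tree V T) \<and>
     (\<forall>T \<subseteq> yes_edges E \<omega> (stop_round V E \<omega>). spanning_tree V T \<longrightarrow> T \<subseteq> R)"
proof -
  obtain T where T: "T \<subseteq> R" "spanning_tree V T"
    using realized_spanning_tree by blast
  from AE_yes_edges_realized AE_eventually_confirmed[OF T] show ?thesis
  proof eventually_elim
    case (elim \<omega>)
    with T(2) show ?case
      by blast
  qed
qed

theorem naive_correct_and_expected_queries_le:
  "(AE \<omega> in naive_space E R p.
      (\<exists>t. \<exists>T \<subseteq> yes_edges E \<omega> t. spanning_tree V T) \<and>
      (\<forall>T \<subseteq> yes_edges E \<omega> (stop_round V E \<omega>). spanning_tree V T \<longrightarrow> T \<subseteq> R))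
   \<and> (\<integral>\<^sup>+ \<omega>. ennreal (real (naive_queries V E \<omega>)) \<partial>naive_space E R p)
       \<le> ennreal (4 / ln 2 * real (card E) * ln (real (card V)))"
proof -
  have "card E * (log 2 (card V) + 3) \<le> card E * (4 / ln 2 * ln (card V))"
    using two_le_card_V by (intro mult_left_mono log2_add_3_le) simp_all
  then have "card E * (log 2 (card V) + 3) \<le> 4 / ln 2 * card E * ln (card V)"
    by (simp add: algebra_simps)
  then show ?thesis
    using AE_naive_correct order_trans[OF nn_integral_naive_queries_le ennreal_leI] by blast
qed

end

theorem lemma4:
  fixes p :: real
  assumes "0 \<le> p" and "p < 1/2"
  shows "\<exists>C::real. \<forall>(V::'a set) E R.
           graph V E \<and> card V \<ge> 2 \<and> R \<subseteq> E \<and> connected_on V R \<longrightarrow>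
             (AE \<omega> in naive_space E R p.
                (\<exists>t. \<exists>T \<subseteq> yes_edges E \<omega> t. spanning_tree V T) \<and>
                (\<forall>T \<subseteq> yes_edges E \<omega> (stop_round V E \<omega>). spanning_tree V T \<longrightarrow> T \<subseteq> R))
           \<and> (\<integral>\<^sup>+ \<omega>. ennreal (real (naive_queries V E \<omega>)) \<partial>naive_space E R p)
               \<le> ennreal (C * real (card E) * ln (real (card V)))"
  using assms
  by (intro exI[of _ "4 / ln 2"] allI impI naive_instance.naive_correct_and_expected_queries_le)
     (simp add: naive_instance_def)

end
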